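(* Let $R$ be a DT ring. Then the factor ring $R/J(R)$ is reduced (has no nonzero nilpotent elements).
   Context: All rings are associative with identity; $J(R)$ is the Jacobson radical, $U(R)$ the group of units. $\Delta(R)=\{x\in R: x+u\in U(R)\text{ for all }u\in U(R)\}$. $\mathrm{Tr}(R)=\{x\in R: x^3=x\}$. A ring $R$ is a DT ring if every $r\in R$ can be written $r=e+d$ with $e\in\mathrm{Tr}(R)$ and $d\in\Delta(R)$. *)

theory Defs
  imports Main
begin

definition units_of_ring :: "'a::ring_1 set" where
  "units_of_ring = {u. \<exists>v. u * v = 1 \<and> v * u = 1}"

definition Delta :: "'a::ring_1 set" where
  "Delta = {x. \<forall>u\<in>units_of_ring. x + u \<in> units_of_ring}"

definition Tr :: "'a::ring_1 set" where
  "Tr = {x. x ^ 3 = x}"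

definition DT_ring :: "'a::ring_1 itself \<Rightarrow> bool" where
  "DT_ring _ \<longleftrightarrow> (\<forall>r::'a. \<exists>e\<in>Tr. \<exists>d\<in>Delta. r = e + d)"

definition left_ideal :: "'a::ring_1 set \<Rightarrow> bool" where
  "left_ideal I \<longleftrightarrow> 0 \<in> I \<and> (\<forall>x\<in>I. \<forall>y\<in>I. x - y \<in> I) \<and> (\<forall>r. \<forall>x\<in>I. r * x \<in> I)"

definition maximal_left_ideal :: "'a::ring_1 set \<Rightarrow> bool" where
  "maximal_left_ideal M \<longleftrightarrow> left_ideal M \<and> M \<noteq> UNIV \<and>
     (\<forall>I. left_ideal I \<and> M \<subseteq> I \<longrightarrow> I = M \<or> I = UNIV)"

definition jacobson :: "'a::ring_1 set" where
  "jacobson = \<Inter> {M. maximal_left_ideal M}"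

(* R/J(R) is reduced: a coset x + J(R) with (x + J)^n = 0 is zero, i.e. x^n \<in> J \<Longrightarrow> x \<in> J *)
definition quotient_by_jacobson_reduced :: "'a::ring_1 itself \<Rightarrow> bool" where
  "quotient_by_jacobson_reduced _ \<longleftrightarrow>
     (\<forall>(x::'a) (n::nat). x ^ n \<in> jacobson \<longrightarrow> x \<in> jacobson)"

end

theory Submission
  imports Defs
begin

text \<open>
  The point is that in a DT ring \<open>\<Delta>(R)\<close> is a left ideal and therefore lies in \<open>J(R)\<close>: for
  \<open>d \<in> \<Delta>\<close> every \<open>1 - r d\<close> is then a unit. Writing \<open>r = e + d'\<close>, this reduces to \<open>e d \<in> \<Delta>\<close> for a
  tripotent \<open>e\<close>, and since \<open>e = w e\<^sup>2\<close> with the involution \<open>w = 1 - e\<^sup>2 + e\<close>, to \<open>h d \<in> \<Delta>\<close> for an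
  idempotent \<open>h\<close>. For the latter, the off-diagonal Peirce components \<open>h d (1 - h)\<close> and
  \<open>(1 - h) d h\<close> lie in \<open>\<Delta>\<close>, hence so does the diagonal part \<open>p\<close> of \<open>d\<close>; as \<open>p\<close> commutes with \<open>h\<close>,
  cutting the inverse of \<open>1 + p\<close> down to the corner \<open>h R h\<close> inverts \<open>1 + h d h\<close>, and by
  Jacobson's lemma then also \<open>1 + h d\<close>.
  Finally, if \<open>x = e + d\<close> and \<open>x\<^sup>n \<in> J\<close>, then \<open>e\<^sup>n \<in> J\<close>, so \<open>e = e\<^sup>n\<^sup>+\<^sup>1 e\<^sup>n \<in> J\<close> and \<open>x \<in> J\<close>.
\<close>

lemma units_of_ringI: "(u::'a::ring_1) * v = 1 \<Longrightarrow> v * u = 1 \<Longrightarrow> u \<in> units_of_ring"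
  unfolding units_of_ring_def by auto

lemma units_of_ringE:
  "(u::'a::ring_1) \<in> units_of_ring \<Longrightarrow> (\<And>v. u * v = 1 \<Longrightarrow> v * u = 1 \<Longrightarrow> P) \<Longrightarrow> P"
  unfolding units_of_ring_def by auto

lemma units_of_ring_mult:
  assumes "(u::'a::ring_1) \<in> units_of_ring" "v \<in> units_of_ring"
  shows "u * v \<in> units_of_ring"
proof -
  obtain u' where u: "u * u' = 1" "u' * u = 1" using assms(1) by (rule units_of_ringE)
  obtain v' where v: "v * v' = 1" "v' * v = 1" using assms(2) by (rule units_of_ringE)
  have "u * v * (v' * u') = 1" by (metis u(1) v(1) mult.assoc mult_1_left)
  moreover have "(v' * u') * (u * v) = 1" by (metis u(2) v(2) mult.assoc mult_1_left)
  ultimately show ?thesis by (rule units_of_ringI)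
qed

lemma units_of_ring_uminus: "(u::'a::ring_1) \<in> units_of_ring \<Longrightarrow> - u \<in> units_of_ring"
  by (erule units_of_ringE, rule units_of_ringI[of _ "- _"]) auto

lemma one_plus_square_zero_in_units: "(y::'a::ring_1) * y = 0 \<Longrightarrow> 1 + y \<in> units_of_ring"
  by (rule units_of_ringI[of _ "1 - y"]) (auto simp: algebra_simps)

lemma one_plus_mult_swap_in_units:
  assumes "1 + (a::'a::ring_1) * b \<in> units_of_ring"
  shows "1 + b * a \<in> units_of_ring"
proof -
  obtain c where c: "(1 + a * b) * c = 1" "c * (1 + a * b) = 1" using assms by (rule units_of_ringE)
  have c1: "c + a * (b * c) = 1" and c2: "c + c * (a * b) = 1"
    using c by (simp_all add: algebra_simps)
  have "(1 + b * a) * (1 - b * c * a) = 1 + b * a - b * (c + a * (b * c)) * a"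
    by (simp add: algebra_simps)
  also have "\<dots> = 1" using c1 by simp
  finally have right: "(1 + b * a) * (1 - b * c * a) = 1" .
  have "(1 - b * c * a) * (1 + b * a) = 1 + b * a - b * (c + c * (a * b)) * a"
    by (simp add: algebra_simps)
  also have "\<dots> = 1" using c2 by simp
  finally have left: "(1 - b * c * a) * (1 + b * a) = 1" .
  show ?thesis using right left by (rule units_of_ringI)
qed

lemma corner_unit_in_units:
  assumes h: "(h::'a::ring_1) * h = h" and u: "u \<in> units_of_ring" and comm: "h * u = u * h"
  shows "(1 - h) + h * u \<in> units_of_ring"
proof -
  obtain v where v: "u * v = 1" "v * u = 1" using u by (rule units_of_ringE)
  have hv: "h * v = v * h"
    by (metis comm v mult.assoc mult_1_left mult_1_right)
  have hh: "h * (h * x) = h * x" for x using h by (metis mult.assoc)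
  have uh: "u * (h * x) = h * (u * x)" "v * (h * x) = h * (v * x)" for x
    using comm hv by (metis mult.assoc)+
  have "((1 - h) + h * u) * ((1 - h) + h * v) = 1"  "((1 - h) + h * v) * ((1 - h) + h * u) = 1"
    using h v comm[symmetric] hv[symmetric] by (simp_all add: algebra_simps hh uh mult.assoc)
  then show ?thesis by (rule units_of_ringI)
qed

lemma Delta_iff: "(d::'a::ring_1) \<in> Delta \<longleftrightarrow> (\<forall>u\<in>units_of_ring. 1 + u * d \<in> units_of_ring)"
proof
  assume d: "d \<in> Delta"
  show "\<forall>u\<in>units_of_ring. 1 + u * d \<in> units_of_ring"
  proof
    fix u :: 'a assume u: "u \<in> units_of_ring"
    then obtain v where v: "u * v = 1" "v * u = 1" by (rule units_of_ringE)
    have "d + v \<in> units_of_ring" using d v by (auto simp: Delta_def intro: units_of_ringI)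
    then have "u * (d + v) \<in> units_of_ring" using u by (simp add: units_of_ring_mult)
    then show "1 + u * d \<in> units_of_ring" using v by (simp add: algebra_simps)
  qed
next
  assume d: "\<forall>u\<in>units_of_ring. 1 + u * d \<in> units_of_ring"
  show "d \<in> Delta" unfolding Delta_def
  proof (intro CollectI ballI)
    fix u :: 'a assume u: "u \<in> units_of_ring"
    then obtain v where v: "u * v = 1" "v * u = 1" by (rule units_of_ringE)
    have "1 + v * d \<in> units_of_ring" using d v by (auto intro: units_of_ringI)
    then have "u * (1 + v * d) \<in> units_of_ring" using u by (simp add: units_of_ring_mult)
    then show "d + u \<in> units_of_ring" using v by (simp add: algebra_simps flip: mult.assoc)
  qed
qed

lemma Delta_one_plus_in_units: "(d::'a::ring_1) \<in> Delta \<Longrightarrow> 1 + d \<in> units_of_ring"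
  using Delta_iff[of d] units_of_ringI[of 1 1] by auto

lemma Delta_uminus:
  assumes "(d::'a::ring_1) \<in> Delta" shows "- d \<in> Delta"
  unfolding Delta_def
proof (intro CollectI ballI)
  fix u :: 'a assume "u \<in> units_of_ring"
  then have "d + - u \<in> units_of_ring" using assms units_of_ring_uminus unfolding Delta_def by blast
  then have "- (d + - u) \<in> units_of_ring" by (rule units_of_ring_uminus)
  then show "- d + u \<in> units_of_ring" by simp
qed

lemma Delta_add: "(a::'a::ring_1) \<in> Delta \<Longrightarrow> b \<in> Delta \<Longrightarrow> a + b \<in> Delta"
  unfolding Delta_def by (simp add: add.assoc)

lemma units_mult_Delta: "(u::'a::ring_1) \<in> units_of_ring \<Longrightarrow> d \<in> Delta \<Longrightarrow> u * d \<in> Delta"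
  unfolding Delta_iff by (simp add: units_of_ring_mult flip: mult.assoc)

lemma Delta_mult_units:
  assumes "(u::'a::ring_1) \<in> units_of_ring" "d \<in> Delta" shows "d * u \<in> Delta"
  unfolding Delta_iff
proof
  fix v :: 'a assume "v \<in> units_of_ring"
  then have "1 + u * (v * d) \<in> units_of_ring"
    using assms Delta_iff by (metis mult.assoc units_of_ring_mult)
  then show "1 + v * (d * u) \<in> units_of_ring"
    by (metis mult.assoc one_plus_mult_swap_in_units)
qed

lemma Delta_mult:
  assumes a: "(a::'a::ring_1) \<in> Delta" and b: "b \<in> Delta" shows "a * b \<in> Delta"
  unfolding Delta_iff
proof
  fix u :: 'a assume "u \<in> units_of_ring"
  then have ua: "u * a \<in> Delta" using a by (rule units_mult_Delta)
  have "- (u * a + b) \<in> Delta" using ua b by (intro Delta_uminus Delta_add)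
  moreover have "(1 + u * a) * (1 + b) \<in> units_of_ring"
    using ua b by (intro units_of_ring_mult Delta_one_plus_in_units)
  ultimately have "- (u * a + b) + (1 + u * a) * (1 + b) \<in> units_of_ring"
    by (simp add: Delta_def)
  then show "1 + u * (a * b) \<in> units_of_ring" by (simp add: algebra_simps)
qed

lemma Delta_mult_one_plus_units:
  assumes "1 + (y::'a::ring_1) \<in> units_of_ring" "d \<in> Delta" shows "d * y \<in> Delta"
proof -
  have "d * (1 + y) + - d \<in> Delta" using assms by (intro Delta_add Delta_mult_units Delta_uminus)
  then show ?thesis by (simp add: algebra_simps)
qed

lemma idempotent_Delta_corner_off_diagonal:
  assumes h: "(h::'a::ring_1) * h = h" and d: "d \<in> Delta"
  shows "h * d * (1 - h) \<in> Delta"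
  unfolding Delta_iff
proof
  fix u :: 'a assume "u \<in> units_of_ring"
  define y where "y = (1 - h) * u * h"
  have "y * y = (1 - h) * u * (h * (1 - h)) * u * h" unfolding y_def by (simp add: mult.assoc)
  then have "y * y = 0" using h by (simp add: algebra_simps)
  then have "1 + d * y \<in> units_of_ring"
    using d by (intro Delta_one_plus_in_units Delta_mult_one_plus_units one_plus_square_zero_in_units)
  then have "1 + (d * (1 - h)) * (u * h) \<in> units_of_ring" unfolding y_def by (simp add: mult.assoc)
  then have "1 + (u * h) * (d * (1 - h)) \<in> units_of_ring" by (rule one_plus_mult_swap_in_units)
  then show "1 + u * (h * d * (1 - h)) \<in> units_of_ring" by (simp add: mult.assoc)
qed

lemma one_plus_idempotent_mult_Delta_in_units:
  assumes h: "(h::'a::ring_1) * h = h" and d: "d \<in> Delta"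
  shows "1 + h * d \<in> units_of_ring"
proof -
  have hh: "h * (h * z) = h * z" for z using h by (metis mult.assoc)
  define x where "x = d - h * d * (1 - h) - (1 - h) * d * h"
  have "(1 - h) * (1 - h) = 1 - h" using h by (simp add: algebra_simps)
  then have "(1 - h) * d * (1 - (1 - h)) \<in> Delta" using d by (rule idempotent_Delta_corner_off_diagonal)
  moreover have "h * d * (1 - h) \<in> Delta" using h d by (rule idempotent_Delta_corner_off_diagonal)
  ultimately have "x \<in> Delta" unfolding x_def diff_conv_add_uminus
    using d by (intro Delta_add Delta_uminus) simp_all
  then have "1 + x \<in> units_of_ring" by (rule Delta_one_plus_in_units)
  moreover have hx: "h * x = h * d * h" "x * h = h * d * h"
    unfolding x_def using h by (simp_all add: algebra_simps hh mult.assoc)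
  ultimately have "(1 - h) + h * (1 + x) \<in> units_of_ring"
    using h by (intro corner_unit_in_units) (simp_all add: algebra_simps)
  then have "1 + (h * d) * h \<in> units_of_ring" using hx by (simp add: algebra_simps)
  then show ?thesis using h by (metis one_plus_mult_swap_in_units mult.assoc)
qed

lemma idempotent_mult_Delta:
  assumes h: "(h::'a::ring_1) * h = h" and d: "d \<in> Delta"
  shows "h * d \<in> Delta"
  unfolding Delta_iff
proof
  fix u :: 'a assume u: "u \<in> units_of_ring"
  then obtain v where v: "u * v = 1" "v * u = 1" by (rule units_of_ringE)
  have "(u * h * v) * (u * h * v) = u * h * v"
    using h v by (simp add: mult.assoc flip: mult.assoc[of v u] mult.assoc[of h h])
  moreover have "u * d \<in> Delta" using u d by (rule units_mult_Delta)
  ultimately have "1 + (u * h * v) * (u * d) \<in> units_of_ring"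
    by (rule one_plus_idempotent_mult_Delta_in_units)
  then show "1 + u * (h * d) \<in> units_of_ring"
    using v by (simp add: mult.assoc flip: mult.assoc[of v u])
qed

lemma tripotent_mult_Delta:
  assumes e: "(e::'a::ring_1) ^ 3 = e" and d: "d \<in> Delta"
  shows "e * d \<in> Delta"
proof -
  have e3: "e * (e * e) = e" using e by (simp add: power3_eq_cube mult.assoc)
  have e3x: "e * (e * (e * x)) = e * x" for x using e3 by (metis mult.assoc)
  define w where "w = 1 - e * e + e"
  have "w * w = 1" unfolding w_def by (simp add: algebra_simps e3 e3x)
  then have "w \<in> units_of_ring" by (intro units_of_ringI[of w w])
  moreover have "(e * e) * (e * e) = e * e" by (simp add: mult.assoc e3)
  ultimately have "w * ((e * e) * d) \<in> Delta" using d by (intro units_mult_Delta idempotent_mult_Delta)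
  moreover have "w * ((e * e) * d) = e * d" unfolding w_def by (simp add: algebra_simps e3 e3x)
  ultimately show ?thesis by simp
qed

lemma DT_ring_mult_Delta:
  assumes "DT_ring TYPE('a::ring_1)" and d: "(d::'a) \<in> Delta"
  shows "r * d \<in> Delta"
proof -
  obtain e d' where "e \<in> Tr" "d' \<in> Delta" "r = e + d'"
    using assms(1) unfolding DT_ring_def by blast
  then show ?thesis using d
    by (auto simp: Tr_def distrib_right intro: Delta_add tripotent_mult_Delta Delta_mult)
qed

lemma tripotent_power_odd:
  assumes "(e::'a::ring_1) ^ 3 = e"
  shows "e ^ (2 * k + 1) = e"
proof (induction k)
  case (Suc k)
  have "e ^ (2 * Suc k + 1) = e ^ (2 + (2 * k + 1))" by simp
  also have "\<dots> = e ^ 2 * e ^ (2 * k + 1)" by (rule power_add)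
  also have "\<dots> = e ^ 3" using Suc by (simp add: power2_eq_square power3_eq_cube)
  finally show ?case using assms by simp
qed simp

lemma mem_jacobson_iff: "x \<in> jacobson \<longleftrightarrow> (\<forall>M. maximal_left_ideal M \<longrightarrow> x \<in> M)"
  unfolding jacobson_def by auto

lemma left_ideal_zero: "left_ideal I \<Longrightarrow> 0 \<in> I"
  and left_ideal_diff: "left_ideal I \<Longrightarrow> x \<in> I \<Longrightarrow> y \<in> I \<Longrightarrow> x - y \<in> I"
  and left_ideal_mult: "left_ideal I \<Longrightarrow> x \<in> I \<Longrightarrow> r * x \<in> I"
  unfolding left_ideal_def by auto

lemma left_ideal_add: "left_ideal I \<Longrightarrow> x \<in> I \<Longrightarrow> y \<in> I \<Longrightarrow> x + y \<in> I"
  using left_ideal_diff[of I x "0 - y"] left_ideal_diff[of I 0 y] left_ideal_zero[of I] by simp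

lemma left_ideal_one_imp_UNIV: "left_ideal I \<Longrightarrow> (1::'a::ring_1) \<in> I \<Longrightarrow> I = UNIV"
  using left_ideal_mult[of I 1] by auto

lemma maximal_left_ideal_imp_left_ideal: "maximal_left_ideal M \<Longrightarrow> left_ideal M"
  unfolding maximal_left_ideal_def by simp

lemma maximal_left_ideal_one_notin: "maximal_left_ideal M \<Longrightarrow> (1::'a::ring_1) \<notin> M"
  unfolding maximal_left_ideal_def using left_ideal_one_imp_UNIV by blast

lemma maximal_left_ideal_add_generated:
  assumes M: "maximal_left_ideal (M::'a::ring_1 set)" and a: "a \<notin> M"
  shows "\<exists>m\<in>M. \<exists>q. y = m + q * a"
proof -
  define L where "L = {m + q * a | m q. m \<in> M}"
  have HM: "left_ideal M" using M by (rule maximal_left_ideal_imp_left_ideal)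
  have "left_ideal L" unfolding left_ideal_def
  proof (intro conjI ballI allI)
    have "(0::'a) = 0 + 0 * a" by simp
    then show "0 \<in> L" unfolding L_def using left_ideal_zero[OF HM] by blast
  next
    fix x z assume "x \<in> L" "z \<in> L"
    then obtain m1 q1 m2 q2 where "x = m1 + q1 * a" "z = m2 + q2 * a" "m1 \<in> M" "m2 \<in> M"
      unfolding L_def by auto
    then have "x - z = (m1 - m2) + (q1 - q2) * a" "m1 - m2 \<in> M"
      using left_ideal_diff[OF HM] by (auto simp: algebra_simps)
    then show "x - z \<in> L" unfolding L_def by blast
  next
    fix r x assume "x \<in> L"
    then obtain m q where "x = m + q * a" "m \<in> M" unfolding L_def by auto
    then have "r * x = r * m + (r * q) * a" "r * m \<in> M"
      using left_ideal_mult[OF HM] by (auto simp: algebra_simps mult.assoc)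
    then show "r * x \<in> L" unfolding L_def by blast
  qed
  moreover have "M \<subseteq> L"
  proof
    fix m assume "m \<in> M"
    moreover have "m = m + 0 * a" by simp
    ultimately show "m \<in> L" unfolding L_def by blast
  qed
  moreover have "a = 0 + 1 * a" by simp
  then have "a \<in> L" unfolding L_def using left_ideal_zero[OF HM] by blast
  ultimately have "L = UNIV" using M a unfolding maximal_left_ideal_def by blast
  then show ?thesis unfolding L_def by blast
qed

lemma left_quasi_regular_imp_mem_jacobson:
  assumes "\<And>r. \<exists>c. c * (1 - r * (y::'a::ring_1)) = 1"
  shows "y \<in> jacobson"
  unfolding mem_jacobson_iff
proof (intro allI impI)
  fix M :: "'a set" assume M: "maximal_left_ideal M"
  show "y \<in> M"
  proof (rule ccontr)
    assume "y \<notin> M"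
    then obtain m q where "m \<in> M" "1 - q * y = m"
      using maximal_left_ideal_add_generated[OF M, of y 1] by (force simp: algebra_simps)
    moreover obtain c where "c * (1 - q * y) = 1" using assms by blast
    ultimately have "1 \<in> M" by (metis M left_ideal_mult maximal_left_ideal_imp_left_ideal)
    then show False using M maximal_left_ideal_one_notin by blast
  qed
qed

lemma maximal_left_ideal_colon:
  assumes M: "maximal_left_ideal (M::'a::ring_1 set)" and r: "r \<notin> M"
  shows "maximal_left_ideal {s. s * r \<in> M}"
proof -
  define K where "K = {s. s * r \<in> M}"
  have HM: "left_ideal M" using M by (rule maximal_left_ideal_imp_left_ideal)
  have K: "left_ideal K" unfolding left_ideal_def K_def
    using left_ideal_zero[OF HM] left_ideal_diff[OF HM] left_ideal_mult[OF HM]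
    by (simp add: left_diff_distrib mult.assoc)
  have "I = UNIV" if I: "left_ideal I" "K \<subseteq> I" "I \<noteq> K" for I
  proof -
    obtain s where s: "s \<in> I" "s * r \<notin> M" using I unfolding K_def by blast
    then obtain m q where m: "m \<in> M" "r = m + q * (s * r)"
      using maximal_left_ideal_add_generated[OF M] by blast
    have "(1 - q * s) * r = m" using m(2) by (simp add: algebra_simps mult.assoc)
    then have "1 - q * s \<in> I" using I(2) m(1) unfolding K_def by auto
    moreover have "q * s \<in> I" using I(1) s(1) by (rule left_ideal_mult)
    ultimately have "(1 - q * s) + q * s \<in> I" by (rule left_ideal_add[OF I(1)])
    then show "I = UNIV" using I(1) left_ideal_one_imp_UNIV by auto
  qed
  moreover have "1 \<notin> K" using r unfolding K_def by simp
  ultimately show ?thesis using K unfolding maximal_left_ideal_def K_def by blast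
qed

lemma jacobson_mult_right:
  assumes j: "j \<in> jacobson" shows "j * (r::'a::ring_1) \<in> jacobson"
  unfolding mem_jacobson_iff
proof (intro allI impI)
  fix M :: "'a set" assume M: "maximal_left_ideal M"
  show "j * r \<in> M"
  proof (cases "r \<in> M")
    case True
    then show ?thesis using M left_ideal_mult maximal_left_ideal_imp_left_ideal by blast
  next
    case False
    then have "j \<in> {s. s * r \<in> M}"
      using j M maximal_left_ideal_colon unfolding mem_jacobson_iff by blast
    then show ?thesis by simp
  qed
qed

lemma jacobson_mult_left: "x \<in> jacobson \<Longrightarrow> r * (x::'a::ring_1) \<in> jacobson"
  and jacobson_diff: "x \<in> jacobson \<Longrightarrow> y \<in> jacobson \<Longrightarrow> x - y \<in> jacobson"
  and jacobson_add: "x \<in> jacobson \<Longrightarrow> y \<in> jacobson \<Longrightarrow> x + y \<in> jacobson"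
  unfolding mem_jacobson_iff
  by (meson left_ideal_mult left_ideal_diff left_ideal_add maximal_left_ideal_imp_left_ideal)+

lemma power_add_diff_power_mem_jacobson:
  assumes d: "d \<in> jacobson"
  shows "(a + d) ^ m - (a::'a::ring_1) ^ m \<in> jacobson"
proof (induction m)
  case 0
  show ?case using jacobson_diff[OF d d] by simp
next
  case (Suc m)
  have "(a + d) * ((a + d) ^ m - a ^ m) + d * a ^ m \<in> jacobson"
    using Suc jacobson_mult_left jacobson_add jacobson_mult_right[OF d] by blast
  moreover have "(a + d) * ((a + d) ^ m - a ^ m) + d * a ^ m = (a + d) ^ Suc m - a ^ Suc m"
    by (simp add: algebra_simps)
  ultimately show ?case by simp
qed

lemma DT_ring_Delta_subset_jacobson:
  assumes "DT_ring TYPE('a::ring_1)" shows "(Delta :: 'a set) \<subseteq> jacobson"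
proof
  fix d :: 'a assume d: "d \<in> Delta"
  show "d \<in> jacobson"
  proof (rule left_quasi_regular_imp_mem_jacobson)
    fix r :: 'a
    have "1 + (- r) * d \<in> units_of_ring"
      using assms d by (intro Delta_one_plus_in_units DT_ring_mult_Delta)
    then show "\<exists>c. c * (1 - r * d) = 1" by (auto elim: units_of_ringE)
  qed
qed

theorem lemma4p2:
  assumes "DT_ring TYPE('a::ring_1)"
  shows "quotient_by_jacobson_reduced TYPE('a)"
  unfolding quotient_by_jacobson_reduced_def
proof (intro allI impI)
  fix x :: 'a and n :: nat
  assume xn: "x ^ n \<in> jacobson"
  obtain e d where e: "e ^ 3 = e" and d: "d \<in> Delta" and x: "x = e + d"
    using assms unfolding DT_ring_def Tr_def by blast
  have dJ: "d \<in> jacobson" using assms d DT_ring_Delta_subset_jacobson by blast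
  have "x ^ n - ((e + d) ^ n - e ^ n) \<in> jacobson"
    using xn dJ by (intro jacobson_diff power_add_diff_power_mem_jacobson)
  then have "e ^ (n + 1) * e ^ n \<in> jacobson" using x by (simp add: jacobson_mult_left)
  moreover have "e ^ (n + 1) * e ^ n = e"
    using tripotent_power_odd[OF e, of n] by (simp add: mult_2 power_add mult.assoc)
  ultimately have "e \<in> jacobson" by simp
  then show "x \<in> jacobson" using x dJ jacobson_add by blast
qed

end
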